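(* Let $\mathbb{F}_q$ be a finite field, $m$ a positive divisor of $q-1$, $n$ a positive integer, and $f(x)=x^nh\big(x^{\frac{q-1}{m}}\big)\in\mathbb{F}_q[x]$ a polynomial with index $m$ which is $m$-nice over $\mathbb{F}_q$. Let $k$ be a positive integer and $b\in\mathbb{F}_q^*$. If $x\in\mathbb{F}_q$ satisfies $f^{(k)}(x)=b$, then $x^{\frac{q-1}{m}}=\psi_f^{(-k)}\big(b^{\frac{q-1}{m}}\big)$.
   Context: $\mu_m$ is the set of $m$-th roots of unity in $\mathbb{F}_q$. Every $f$ with $f(0)=0$ can be written uniquely as $f(x)=x^nh(x^{\frac{q-1}{m}})$ with $h(0)\ne0$ and $m$ minimal; $m$ is the index. $\psi_f(x)=x^nh(x)^{\frac{q-1}{m}}$, and $f^{(k)},\psi_f^{(k)}$ denote iterates. $f$ is $m$-nice if $\psi_f$ restricted to $\mu_m\setminus\psi_f^{-1}(0)$ is an injective map into $\mu_m$. For $y\in\mu_m$, $\psi_f^{(-k)}(y)$ denotes the element $\xi\in\mu_m$ with $\psi_f^{(k)}(\xi)=y$ (unique by $m$-niceness). *)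

theory Defs
  imports "HOL-Computational_Algebra.Polynomial" "HOL-Library.Cardinality"
begin

text \<open>The finite field F_q is a type 'a of class finite and field; q = CARD('a).\<close>

definition mu :: "nat \<Rightarrow> ('a::{finite,field}) set" where
  "mu m = {x. x ^ m = 1}"

definition has_form :: "('a::{finite,field}) poly \<Rightarrow> nat \<Rightarrow> nat \<Rightarrow> 'a poly \<Rightarrow> bool" where
  "has_form f m n h \<longleftrightarrow> 0 < m \<and> m dvd (CARD('a) - 1) \<and> poly h 0 \<noteq> 0 \<and>
     f = monom 1 n * pcompose h (monom 1 ((CARD('a) - 1) div m))"

definition index :: "('a::{finite,field}) poly \<Rightarrow> nat" where
  "index f = (LEAST m. \<exists>n h. has_form f m n h)"

definition psi :: "nat \<Rightarrow> ('a::{finite,field}) poly \<Rightarrow> nat \<Rightarrow> 'a \<Rightarrow> 'a" where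
  "psi n h m x = x ^ n * poly h x ^ ((CARD('a) - 1) div m)"

definition m_nice :: "nat \<Rightarrow> ('a::{finite,field}) poly \<Rightarrow> nat \<Rightarrow> bool" where
  "m_nice n h m \<longleftrightarrow>
     (let D = mu m - {x. psi n h m x = 0} in inj_on (psi n h m) D \<and> psi n h m ` D \<subseteq> mu m)"

definition psi_inv_iter :: "nat \<Rightarrow> ('a::{finite,field}) poly \<Rightarrow> nat \<Rightarrow> nat \<Rightarrow> 'a \<Rightarrow> 'a" where
  "psi_inv_iter n h m k y = (THE xi. xi \<in> mu m \<and> (psi n h m ^^ k) xi = y)"

end

theory Submission
  imports Defs
begin

text \<open>The power map \<open>x \<mapsto> x ^ ((q - 1) div m)\<close> sends \<open>F\<^sub>q\<^sup>*\<close> into \<open>\<mu>\<^sub>m\<close> and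
  semiconjugates \<open>f\<close> to \<open>\<psi>\<^sub>f\<close>, so it carries the orbit of \<open>x\<close> under \<open>f\<close> to the orbit of
  \<open>x ^ ((q - 1) div m)\<close> under \<open>\<psi>\<^sub>f\<close>. Since \<open>0\<close> is fixed by \<open>f\<close>, \<open>f\<^sup>k(x) = b \<noteq> 0\<close> forces
  \<open>x \<noteq> 0\<close>; and \<open>m\<close>-niceness makes \<open>\<psi>\<^sub>f\<^sup>k\<close> injective on the points of \<open>\<mu>\<^sub>m\<close> it does not
  send to \<open>0\<close>, which identifies \<open>x ^ ((q - 1) div m)\<close> as the unique preimage defining
  \<open>\<psi>\<^sub>f\<^sup>-\<^sup>k(b ^ ((q - 1) div m))\<close>.\<close>

lemma power_card_minus_one_eq_one:
  fixes x :: "'a::{finite,field}"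
  assumes "x \<noteq> 0"
  shows "x ^ (CARD('a) - 1) = 1"
proof -
  let ?S = "UNIV - {0::'a}"
  have inj: "inj_on ((*) x) ?S"
    using assms by (auto simp: inj_on_def)
  then have "(*) x ` ?S = ?S"
    using assms by (intro endo_inj_surj) auto
  then have "(\<Prod>y\<in>?S. x * y) = (\<Prod>y\<in>?S. y)"
    using prod.reindex[OF inj, of id] by simp
  moreover have "(\<Prod>y\<in>?S. x * y) = x ^ card ?S * (\<Prod>y\<in>?S. y)"
    by (simp add: prod.distrib)
  moreover have "(\<Prod>y\<in>?S. y) \<noteq> 0"
    by simp
  moreover have "card ?S = CARD('a) - 1"
    by (simp add: card_Diff_singleton)
  ultimately show ?thesis
    by simp
qed

lemma funpow_fixpoint:
  assumes "g z = z"
  shows "(g ^^ k) z = z"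
  using assms by (induction k) auto

lemma funpow_semiconj:
  assumes "\<And>x. p (f x) = g (p x)"
  shows "p ((f ^^ k) x) = (g ^^ k) (p x)"
  using assms by (induction k) auto

lemma inj_on_funpow_nonzero:
  fixes g :: "'a \<Rightarrow> 'a::zero"
  assumes "g 0 = 0"
    and inj: "inj_on g (A - {x. g x = 0})"
    and maps_to: "g ` (A - {x. g x = 0}) \<subseteq> A"
  shows "inj_on (g ^^ k) {x \<in> A. (g ^^ k) x \<noteq> 0}"
proof (induction k)
  case 0
  show ?case by simp
next
  case (Suc k)
  show ?case
  proof (rule inj_onI)
    fix x1 x2
    assume x1: "x1 \<in> {x \<in> A. (g ^^ Suc k) x \<noteq> 0}"
      and x2: "x2 \<in> {x \<in> A. (g ^^ Suc k) x \<noteq> 0}"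
      and eq: "(g ^^ Suc k) x1 = (g ^^ Suc k) x2"
    have shift: "(g ^^ Suc k) x = (g ^^ k) (g x)" for x
      by (simp add: funpow_swap1)
    have "(g ^^ k) 0 = 0"
      using funpow_fixpoint \<open>g 0 = 0\<close> .
    then have "g x1 \<noteq> 0" "g x2 \<noteq> 0"
      using x1 x2 shift by force+
    then have "g x1 \<in> {x \<in> A. (g ^^ k) x \<noteq> 0}" "g x2 \<in> {x \<in> A. (g ^^ k) x \<noteq> 0}"
      using maps_to x1 x2 shift by auto
    then have "g x1 = g x2"
      using inj_onD[OF Suc.IH] eq shift by simp
    then show "x1 = x2"
      using inj_onD[OF inj] x1 x2 \<open>g x1 \<noteq> 0\<close> by auto
  qed
qed

lemma psi_zero:
  assumes "0 < n"
  shows "psi n h m 0 = 0"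
  using assms by (simp add: psi_def)

lemma inj_on_psi_funpow:
  assumes "m_nice n h m" and "0 < n"
  shows "inj_on (psi n h m ^^ k) {\<xi> \<in> mu m. (psi n h m ^^ k) \<xi> \<noteq> 0}"
  using assms by (intro inj_on_funpow_nonzero psi_zero) (auto simp: m_nice_def Let_def)

lemma psi_inv_iter_eqI:
  assumes "m_nice n h m" and "0 < n"
    and "\<xi> \<in> mu m" and "(psi n h m ^^ k) \<xi> = y" and "y \<noteq> 0"
  shows "psi_inv_iter n h m k y = \<xi>"
  unfolding psi_inv_iter_def
proof (rule the_equality)
  fix \<zeta>
  assume "\<zeta> \<in> mu m \<and> (psi n h m ^^ k) \<zeta> = y"
  then show "\<zeta> = \<xi>"
    using inj_onD[OF inj_on_psi_funpow[OF assms(1,2)]] assms(3-5) by auto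
qed (use assms in simp)

lemma has_form_poly_zero:
  assumes "has_form f m n h" and "0 < n"
  shows "poly f 0 = 0"
  using assms by (simp add: has_form_def poly_monom)

lemma has_form_power_poly:
  fixes f h :: "('a::{finite,field}) poly"
  assumes "has_form f m n h"
  shows "poly f x ^ ((CARD('a) - 1) div m) = psi n h m (x ^ ((CARD('a) - 1) div m))"
  using assms unfolding has_form_def psi_def
  by (simp add: poly_pcompose poly_monom power_mult_distrib power_mult[symmetric] mult.commute)

lemma power_in_mu:
  fixes x :: "'a::{finite,field}"
  assumes "x \<noteq> 0" and "m dvd CARD('a) - 1"
  shows "x ^ ((CARD('a) - 1) div m) \<in> mu m"
  using assms power_card_minus_one_eq_one[OF assms(1)]
  by (simp add: mu_def power_mult[symmetric])

theorem lemma3p5: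
  fixes f h :: "('a::{finite,field}) poly" and m n k :: nat and b x :: 'a
  assumes "0 < m" and "m dvd (CARD('a) - 1)" and "0 < n"
    and "has_form f m n h" and "index f = m"
    and "m_nice n h m"
    and "0 < k" and "b \<noteq> 0"
    and "(poly f ^^ k) x = b"
  shows "x ^ ((CARD('a) - 1) div m) = psi_inv_iter n h m k (b ^ ((CARD('a) - 1) div m))"
proof -
  \<comment> \<open>Neither the minimality of the index nor \<open>k > 0\<close> is needed.\<close>
  let ?d = "(CARD('a) - 1) div m"
  have "(poly f ^^ k) 0 = 0"
    using funpow_fixpoint has_form_poly_zero[OF assms(4,3)] .
  then have "x \<noteq> 0"
    using assms(8,9) by auto
  then have "x ^ ?d \<in> mu m"
    using power_in_mu assms(2) by blast
  moreover have "(psi n h m ^^ k) (x ^ ?d) = b ^ ?d"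
    using funpow_semiconj[where p = "\<lambda>y. y ^ ?d" and f = "poly f" and g = "psi n h m"
        and k = k and x = x, OF has_form_power_poly[OF assms(4)]] assms(9)
    by simp
  ultimately show ?thesis
    using psi_inv_iter_eqI[OF assms(6,3)] assms(8) by simp
qed

end
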